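(* Let $r>s\ge1$ be integers and let $n\ge1$ be an integer. Then the $(r,s)$-Bell number $\phi_n^{(r,s)}$ satisfies \[ \phi_n^{(r,s)}=\frac{(r-s)^{sn}}{e}\sum_{k=0}^{\infty}\frac{1}{k!}\prod_{l=1}^{s}\frac{\Gamma\!\big(n+\frac{k-l+1}{r-s}\big)}{\Gamma\!\big(\frac{k-l+1}{r-s}\big)}. \]
   Context: Let $D=\frac{d}{dx}$ and let $x$ denote the operator of multiplication by $x$. For integers $r\ge s\ge1$ and $n\ge1$, the generalized $(r,s)$-Stirling numbers of the second kind $S_{r,s}(n,k)$ (of Blasiak–Penson–Solomon) are defined by the normal ordering identity \[ (x^{r}D^{s})^{n}=x^{n(r-s)}\sum_{k=s}^{ns}S_{r,s}(n,k)\,x^{k}D^{k}, \] and the $(r,s)$-Bell numbers are $\phi_n^{(r,s)}=\sum_{k=s}^{ns}S_{r,s}(n,k)$. Here the ratio $\Gamma(n+a)/\Gamma(a)$ stands for the rising factorial $a(a+1)\cdots(a+n-1)$ (which is its value, or limiting value, also when $a$ is a nonpositive integer). *)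

theory Defs
  imports "HOL-Computational_Algebra.Polynomial" Complex_Main
begin

definition mulx :: "real poly \<Rightarrow> real poly" where
  "mulx p = [:0, 1:] * p"

definition opD :: "real poly \<Rightarrow> real poly" where
  "opD p = pderiv p"

definition xrDs :: "nat \<Rightarrow> nat \<Rightarrow> real poly \<Rightarrow> real poly" where
  "xrDs r s = (mulx ^^ r) \<circ> (opD ^^ s)"

definition gen_stirling2 :: "nat \<Rightarrow> nat \<Rightarrow> nat \<Rightarrow> nat \<Rightarrow> real" where
  "gen_stirling2 r s n = (THE c. (\<forall>k. k \<notin> {s..n*s} \<longrightarrow> c k = 0) \<and>
     (\<forall>p. (xrDs r s ^^ n) p =
        (mulx ^^ (n * (r - s))) (\<Sum>k=s..n*s. smult (c k) ((mulx ^^ k) ((opD ^^ k) p)))))"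

definition gen_bell :: "nat \<Rightarrow> nat \<Rightarrow> nat \<Rightarrow> real" where
  "gen_bell r s n = (\<Sum>k=s..n*s. gen_stirling2 r s n k)"

end

theory Submission
  imports Defs
begin

text \<open>
  Both sides of the normal ordering act diagonally on monomials:
  \<open>(x^r D^s)^n x^m = P(m) x^(m + n(r-s))\<close> with \<open>P(m) = \<Prod>j<n. (m + j(r-s))\<^sub>s\<close>,
  and \<open>x^k D^k x^m = (m)\<^sub>k x^m\<close> for the falling factorial \<open>(m)\<^sub>k\<close>. So the Stirling
  numbers are the coefficients of \<open>P\<close> in the falling-factorial basis: they exist because
  \<open>P\<close> is \<open>(m)\<^sub>s\<close> times a polynomial of degree \<open>(n-1)s\<close>, and are unique because the
  falling factorials are linearly independent. Dobinski's identity
  \<open>\<Sum>m. (m)\<^sub>k / m! = e\<close> then turns \<open>\<Sum>m. P(m) / m!\<close> into \<open>e \<phi>\<^sub>n\<close>, and \<open>P(m)\<close>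
  is \<open>(r-s)^(sn)\<close> times the product of rising factorials in the statement.
\<close>

section \<open>Falling factorials\<close>

definition falling_fact :: "nat \<Rightarrow> nat \<Rightarrow> real" where
  "falling_fact k m = (\<Prod>i<k. real m - real i)"

lemma falling_fact_0 [simp]: "falling_fact 0 m = 1"
  by (simp add: falling_fact_def)

lemma falling_fact_Suc: "falling_fact (Suc k) m = falling_fact k m * (real m - real k)"
  by (simp add: falling_fact_def)

lemma falling_fact_eq_0: "m < k \<Longrightarrow> falling_fact k m = 0"
  by (auto simp: falling_fact_def)

lemma falling_fact_self_nonzero: "falling_fact k k \<noteq> 0"
  by (auto simp: falling_fact_def)

lemma falling_fact_add_self: "falling_fact k (i + k) * fact i = fact (i + k)"
proof (induction k arbitrary: i)
  case (Suc k)
  have "falling_fact (Suc k) (i + Suc k) * fact i = falling_fact k (Suc i + k) * fact (Suc i)"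
    by (simp add: falling_fact_Suc algebra_simps)
  also have "\<dots> = fact (i + Suc k)"
    using Suc.IH[of "Suc i"] by simp
  finally show ?case .
qed simp

lemma falling_fact_add:
  "falling_fact k (m + q) = (\<Prod>i<k. real m + (real q - real i))"
  by (simp add: falling_fact_def algebra_simps)

lemma falling_fact_over_fact_sums: "(\<lambda>m. falling_fact k m / fact m) sums exp 1"
proof -
  have "falling_fact k (i + k) / fact (i + k) = inverse (fact i) * 1 ^ i" for i
    using falling_fact_add_self[of k i] by (simp add: field_simps)
  then have "(\<lambda>i. falling_fact k (i + k) / fact (i + k)) sums exp 1"
    using exp_converges[of "1::real"] by simp
  then have "(\<lambda>m. falling_fact k m / fact m) sums (exp 1 + (\<Sum>i<k. falling_fact k i / fact i))"
    by (subst (asm) sums_iff_shift)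
  then show ?thesis
    by (simp add: falling_fact_eq_0)
qed

text \<open>Linear independence: \<open>(m)\<^sub>k\<close> vanishes for \<open>m < k\<close> but not at \<open>m = k\<close>.\<close>
lemma falling_fact_combination_eq_0:
  assumes "\<And>m. (\<Sum>j\<le>N. c j * falling_fact j m) = 0" and "k \<le> N"
  shows "c k = 0"
  using \<open>k \<le> N\<close>
proof (induction k rule: less_induct)
  case (less k)
  have "(\<Sum>j\<in>{..N} - {k}. c j * falling_fact j k) = 0"
  proof (rule sum.neutral, rule ballI)
    fix j assume "j \<in> {..N} - {k}"
    then show "c j * falling_fact j k = 0"
      using less.IH[of j] less.prems falling_fact_eq_0[of k j] by (cases "j < k") auto
  qed
  moreover have "(\<Sum>j\<le>N. c j * falling_fact j k)
      = c k * falling_fact k k + (\<Sum>j\<in>{..N} - {k}. c j * falling_fact j k)"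
    using less.prems by (subst sum.remove[of _ k]) auto
  ultimately show ?case
    using assms(1)[of k] falling_fact_self_nonzero[of k] by simp
qed

section \<open>Expansions in falling factorials\<close>

definition falling_fact_span :: "nat \<Rightarrow> nat \<Rightarrow> (nat \<Rightarrow> real) \<Rightarrow> bool" where
  "falling_fact_span a b f \<longleftrightarrow>
     (\<exists>c. (\<forall>k<a. c k = 0) \<and> (\<forall>m. f m = (\<Sum>k\<le>b. c k * falling_fact k m)))"

lemma falling_fact_span_falling_fact: "falling_fact_span k k (falling_fact k)"
  unfolding falling_fact_span_def
  by (rule exI[of _ "\<lambda>j. of_bool (j = k)"]) simp

text \<open>Uses \<open>(m)\<^sub>k (m + e) = (m)\<^sub>k\<^sub>+\<^sub>1 + (k + e) (m)\<^sub>k\<close>.\<close>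
lemma falling_fact_span_mult_linear:
  assumes "falling_fact_span a b f"
  shows "falling_fact_span a (Suc b) (\<lambda>m. f m * (real m + e))"
proof -
  obtain c where c0: "\<forall>k<a. c k = 0" and cf: "\<forall>m. f m = (\<Sum>k\<le>b. c k * falling_fact k m)"
    using assms unfolding falling_fact_span_def by blast
  define c' where "c' k = (case k of 0 \<Rightarrow> 0 | Suc j \<Rightarrow> c j) +
      (if k \<le> b then c k * (real k + e) else 0)" for k
  have "c' k = 0" if "k < a" for k
    using that c0 by (auto simp: c'_def split: nat.split)
  moreover have "f m * (real m + e) = (\<Sum>k\<le>Suc b. c' k * falling_fact k m)" for m
  proof -
    have "f m * (real m + e) = (\<Sum>k\<le>b. c k * falling_fact (Suc k) m)
        + (\<Sum>k\<le>b. c k * (real k + e) * falling_fact k m)"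
      by (simp add: cf sum_distrib_right falling_fact_Suc flip: sum.distrib)
        (simp add: algebra_simps)
    also have "(\<Sum>k\<le>b. c k * falling_fact (Suc k) m) =
        (\<Sum>k\<le>Suc b. (case k of 0 \<Rightarrow> 0 | Suc j \<Rightarrow> c j) * falling_fact k m)"
      by (subst sum.atMost_Suc_shift) simp
    also have "(\<Sum>k\<le>b. c k * (real k + e) * falling_fact k m) =
        (\<Sum>k\<le>Suc b. (if k \<le> b then c k * (real k + e) else 0) * falling_fact k m)"
      by simp
    finally show ?thesis
      by (simp add: c'_def distrib_right sum.distrib)
  qed
  ultimately show ?thesis
    unfolding falling_fact_span_def by blast
qed

lemma falling_fact_span_mult_prod:
  assumes "falling_fact_span a b f"
  shows "falling_fact_span a (b + t) (\<lambda>m. f m * (\<Prod>i<t. real m + e i))"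
proof (induction t)
  case (Suc t)
  from falling_fact_span_mult_linear[OF Suc, of "e t"] show ?case
    by (simp add: mult.assoc)
qed (use assms in simp)

section \<open>The operators on monomials\<close>

text \<open>The eigenvalue \<open>P(m)\<close>: \<open>(x^r D^s)^n\<close> maps \<open>x^m\<close> to \<open>P(m) x^(m + n(r-s))\<close>.\<close>
definition xrDs_pow_factor :: "nat \<Rightarrow> nat \<Rightarrow> nat \<Rightarrow> nat \<Rightarrow> real" where
  "xrDs_pow_factor r s n m = (\<Prod>j<n. falling_fact s (m + j * (r - s)))"

lemma falling_fact_span_xrDs_pow_factor:
  "n \<ge> 1 \<Longrightarrow> falling_fact_span s (n * s) (xrDs_pow_factor r s n)"
proof (induction n rule: dec_induct)
  case base
  then show ?case
    using falling_fact_span_falling_fact[of s] by (simp add: xrDs_pow_factor_def)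
next
  case (step n)
  from falling_fact_span_mult_prod[OF step.IH, of s "\<lambda>i. real (n * (r - s)) - real i"]
  show ?case
    by (simp add: xrDs_pow_factor_def falling_fact_add add.commute)
qed

lemma mulx_pow: "(mulx ^^ k) p = monom 1 k * p"
  by (induction k) (simp_all add: mulx_def monom_Suc)

lemma opD_pow_monom: "(opD ^^ k) (monom c m) = monom (c * falling_fact k m) (m - k)"
proof (induction k)
  case (Suc k)
  then show ?case
    by (cases "k \<le> m")
      (simp_all add: opD_def pderiv_monom falling_fact_Suc falling_fact_eq_0 of_nat_diff
        algebra_simps)
qed simp

lemma xrDs_monom:
  assumes "s \<le> r"
  shows "xrDs r s (monom c m) = monom (c * falling_fact s m) (m + (r - s))"
proof (cases "s \<le> m")
  case True
  with assms have "r + (m - s) = m + (r - s)" by arith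
  then show ?thesis by (simp add: xrDs_def mulx_pow opD_pow_monom mult_monom)
qed (simp add: xrDs_def mulx_pow opD_pow_monom mult_monom falling_fact_eq_0)

lemma xrDs_pow_monom:
  assumes "s \<le> r"
  shows "(xrDs r s ^^ n) (monom c m) = monom (c * xrDs_pow_factor r s n m) (m + n * (r - s))"
proof -
  obtain d where "r = s + d"
    using assms le_Suc_ex by blast
  then show ?thesis
    by (induction n) (simp_all add: xrDs_monom xrDs_pow_factor_def algebra_simps)
qed

lemma additive_opD_pow: "additive (opD ^^ k)"
  by unfold_locales (induction k, simp_all add: opD_def pderiv_add)

lemma additive_xrDs_pow: "additive (xrDs r s ^^ n)"
  by unfold_locales
    (induction n, simp_all add: xrDs_def mulx_pow additive.add[OF additive_opD_pow] distrib_left)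

lemma additive_eq_on_monoms:
  fixes L M :: "'a::ab_group_add poly \<Rightarrow> 'b::ab_group_add"
  assumes "additive L" "additive M" and "\<And>a m. L (monom a m) = M (monom a m)"
  shows "L = M"
proof
  fix p
  have "L p = L (\<Sum>i\<le>degree p. monom (coeff p i) i)"
    by (simp add: poly_as_sum_of_monoms)
  also have "\<dots> = M (\<Sum>i\<le>degree p. monom (coeff p i) i)"
    by (simp add: additive.sum[OF assms(1)] additive.sum[OF assms(2)] assms(3))
  finally show "L p = M p"
    by (simp add: poly_as_sum_of_monoms)
qed

section \<open>Normal orderings\<close>

definition normal_ordered :: "nat \<Rightarrow> (nat \<Rightarrow> real) \<Rightarrow> nat set \<Rightarrow> real poly \<Rightarrow> real poly" where
  "normal_ordered N c A p = (mulx ^^ N) (\<Sum>k\<in>A. smult (c k) ((mulx ^^ k) ((opD ^^ k) p)))"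

definition normal_ordering :: "nat \<Rightarrow> nat \<Rightarrow> nat \<Rightarrow> (nat \<Rightarrow> real) \<Rightarrow> bool" where
  "normal_ordering r s n c \<longleftrightarrow> (\<forall>k. k \<notin> {s..n * s} \<longrightarrow> c k = 0) \<and>
     xrDs r s ^^ n = normal_ordered (n * (r - s)) c {s..n * s}"

lemma gen_stirling2_eq_The: "gen_stirling2 r s n = (THE c. normal_ordering r s n c)"
  by (simp add: gen_stirling2_def normal_ordering_def normal_ordered_def fun_eq_iff)

lemma normal_ordered_monom:
  "normal_ordered N c A (monom a m) = monom (a * (\<Sum>k\<in>A. c k * falling_fact k m)) (m + N)"
proof -
  have "(mulx ^^ k) ((opD ^^ k) (monom a m)) = monom (a * falling_fact k m) m" for k
    by (cases "k \<le> m") (simp_all add: mulx_pow opD_pow_monom mult_monom falling_fact_eq_0)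
  then show ?thesis
    by (simp add: normal_ordered_def mulx_pow smult_monom mult_monom sum_distrib_left
        flip: monom_sum) (simp add: algebra_simps)
qed

lemma additive_normal_ordered: "additive (normal_ordered N c A)"
  by unfold_locales
    (simp add: normal_ordered_def mulx_pow additive.add[OF additive_opD_pow] distrib_left
      smult_add_right sum.distrib)

lemma normal_ordering_iff_falling_fact:
  assumes "s \<le> r"
  shows "normal_ordering r s n c \<longleftrightarrow> (\<forall>k. k \<notin> {s..n * s} \<longrightarrow> c k = 0) \<and>
    (\<forall>m. (\<Sum>k=s..n * s. c k * falling_fact k m) = xrDs_pow_factor r s n m)"
proof -
  have "xrDs r s ^^ n = normal_ordered (n * (r - s)) c {s..n * s} \<longleftrightarrow>
      (\<forall>a m. (xrDs r s ^^ n) (monom a m) = normal_ordered (n * (r - s)) c {s..n * s} (monom a m))"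
    using additive_eq_on_monoms[OF additive_xrDs_pow additive_normal_ordered] by auto
  also have "\<dots> \<longleftrightarrow> (\<forall>m. (\<Sum>k=s..n * s. c k * falling_fact k m) = xrDs_pow_factor r s n m)"
    by (simp add: xrDs_pow_monom[OF assms] normal_ordered_monom) (metis mult_1)
  finally show ?thesis
    by (simp add: normal_ordering_def)
qed

lemma normal_ordering_exists:
  assumes "s \<le> r" and "n \<ge> 1"
  shows "\<exists>c. normal_ordering r s n c"
proof -
  obtain c where c_low: "\<forall>k<s. c k = 0"
    and c_eq: "\<forall>m. xrDs_pow_factor r s n m = (\<Sum>k\<le>n * s. c k * falling_fact k m)"
    using falling_fact_span_xrDs_pow_factor[OF assms(2)] unfolding falling_fact_span_def by blast
  have "(\<Sum>k=s..n * s. c k * falling_fact k m) = (\<Sum>k\<le>n * s. c k * falling_fact k m)" for m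
    by (rule sum.mono_neutral_left) (auto simp: c_low)
  then have "(\<Sum>k=s..n * s. c k * falling_fact k m) = xrDs_pow_factor r s n m" for m
    by (simp add: c_eq)
  moreover have "(\<Sum>k=s..n * s. (if k \<in> {s..n * s} then c k else 0) * falling_fact k m)
      = (\<Sum>k=s..n * s. c k * falling_fact k m)" for m
    by (rule sum.cong) auto
  ultimately have "normal_ordering r s n (\<lambda>k. if k \<in> {s..n * s} then c k else 0)"
    by (simp add: normal_ordering_iff_falling_fact[OF assms(1)])
  then show ?thesis by blast
qed

lemma normal_ordering_unique:
  assumes "s \<le> r" and "normal_ordering r s n c" and "normal_ordering r s n c'"
  shows "c = c'"
proof
  fix k
  have "(\<Sum>j\<le>n * s. b j * falling_fact j m) = xrDs_pow_factor r s n m"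
    if "normal_ordering r s n b" for b m
  proof -
    have "(\<Sum>j\<le>n * s. b j * falling_fact j m) = (\<Sum>j=s..n * s. b j * falling_fact j m)"
      using that by (intro sum.mono_neutral_right) (auto simp: normal_ordering_def)
    with that show ?thesis
      by (simp add: normal_ordering_iff_falling_fact[OF assms(1)])
  qed
  then have eq: "(\<Sum>j\<le>n * s. c j * falling_fact j m) = (\<Sum>j\<le>n * s. c' j * falling_fact j m)"
    for m using assms(2,3) by simp
  show "c k = c' k"
  proof (cases "k \<le> n * s")
    case True
    have "c k - c' k = 0"
      by (rule falling_fact_combination_eq_0[OF _ True])
        (simp add: eq left_diff_distrib sum_subtractf)
    then show ?thesis by simp
  qed (use assms(2,3) in \<open>simp add: normal_ordering_def\<close>)
qed

lemma gen_stirling2_falling_fact: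
  assumes "s \<le> r" and "n \<ge> 1"
  shows "(\<Sum>k=s..n * s. gen_stirling2 r s n k * falling_fact k m) = xrDs_pow_factor r s n m"
proof -
  obtain c where c: "normal_ordering r s n c"
    using normal_ordering_exists[OF assms] ..
  have "normal_ordering r s n (gen_stirling2 r s n)"
    unfolding gen_stirling2_eq_The
    by (metis theI c normal_ordering_unique[OF assms(1)])
  then show ?thesis
    by (simp add: normal_ordering_iff_falling_fact[OF assms(1)])
qed

lemma xrDs_pow_factor_over_fact_sums:
  assumes "s \<le> r" and "n \<ge> 1"
  shows "(\<lambda>m. xrDs_pow_factor r s n m / fact m) sums (gen_bell r s n * exp 1)"
proof -
  have "(\<lambda>m. \<Sum>k=s..n * s. gen_stirling2 r s n k * (falling_fact k m / fact m))
      sums (\<Sum>k=s..n * s. gen_stirling2 r s n k * exp 1)"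
    by (intro sums_sum sums_mult falling_fact_over_fact_sums)
  then show ?thesis
    by (simp add: gen_bell_def sum_distrib_right sum_divide_distrib
        flip: gen_stirling2_falling_fact[OF assms])
qed

section \<open>Rising factorials\<close>

lemma power_mult_pochhammer_divide:
  "(d::real) \<noteq> 0 \<Longrightarrow> d ^ n * pochhammer (a / d) n = (\<Prod>j<n. a + real j * d)"
  by (induction n) (simp_all add: pochhammer_rec' field_simps)

lemma xrDs_pow_factor_pochhammer:
  assumes "s < r"
  shows "xrDs_pow_factor r s n m = real (r - s) ^ (s * n) *
    (\<Prod>l=1..s. pochhammer ((real m - real l + 1) / real (r - s)) n)"
proof -
  define d where "d = real (r - s)"
  have "d \<noteq> 0" using assms by (simp add: d_def)
  have "d ^ (s * n) * (\<Prod>l=1..s. pochhammer ((real m - real l + 1) / d) n)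
      = (\<Prod>i<s. d ^ n * pochhammer ((real m - real i) / d) n)"
    by (simp add: prod.atLeast1_atMost_eq prod.distrib power_mult mult.commute)
  also have "\<dots> = (\<Prod>i<s. \<Prod>j<n. real m + (real j * d - real i))"
    using \<open>d \<noteq> 0\<close> by (simp add: power_mult_pochhammer_divide algebra_simps)
  also have "\<dots> = (\<Prod>j<n. \<Prod>i<s. real m + (real j * d - real i))"
    by (rule prod.swap)
  also have "\<dots> = xrDs_pow_factor r s n m"
    by (simp add: xrDs_pow_factor_def falling_fact_add d_def)
  finally show ?thesis
    by (simp add: d_def)
qed

theorem theorem2:
  fixes r s n :: nat
  assumes "r > s" and "s \<ge> 1" and "n \<ge> 1"
  shows "gen_bell r s n =
    (real r - real s) ^ (s * n) / exp 1 *
    (\<Sum>k. 1 / fact k * (\<Prod>l=1..s. pochhammer ((real k - real l + 1) / (real r - real s)) n))"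
proof -
  define d where "d = real (r - s)"
  have d: "real r - real s = d" "d > 0"
    using assms(1) by (simp_all add: d_def)
  have "(\<lambda>k. xrDs_pow_factor r s n k / fact k / d ^ (s * n))
      sums (gen_bell r s n * exp 1 / d ^ (s * n))"
    using xrDs_pow_factor_over_fact_sums[OF less_imp_le[OF assms(1)] assms(3)] by (rule sums_divide)
  then have "(\<lambda>k. 1 / fact k * (\<Prod>l=1..s. pochhammer ((real k - real l + 1) / d) n))
      sums (gen_bell r s n * exp 1 / d ^ (s * n))"
    using d(2) by (simp add: xrDs_pow_factor_pochhammer[OF assms(1)] d_def)
  then show ?thesis
    using d by (simp add: sums_iff field_simps)
qed

end
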